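(* For the iterates of SONATA with step-size $\alpha\in(0,1]$ under Assumptions (A), (B), (C), (W), for every agent $i$ and every $\nu\ge0$: $$U(x_i^{\nu+1/2})\le U(x_i^\nu)-\alpha\Big(\big(1-\tfrac\alpha2\big)\tilde\mu_i+\tfrac\alpha2D_i^\ell\Big)\|d_i^\nu\|^2+\alpha\|d_i^\nu\|\,\|\delta_i^\nu\|.$$
   Context: Problem (P): minimize $U=F+G$ over $\mathcal K$, $F=\frac1m\sum_{i=1}^mf_i$. (A): $\mathcal K\subseteq\mathbb R^d$ nonempty closed convex; $f_i$ twice differentiable convex on open $\mathcal O\supseteq\mathcal K$; $\mu I\preceq\nabla^2F\preceq LI$ on $\mathcal K$ ($\mu>0$, $L<\infty$); $G$ convex on $\mathcal K$. (B): connected undirected graph on $\{1,\dots,m\}$, edges $\mathcal E$. (W): $w_{ii}>0$; for $i\ne j$, $w_{ij}>0$ iff $(i,j)\in\mathcal E$, else 0; $W$ doubly stochastic. (C): $\tilde f_i:\mathcal O\times\mathcal O\to\mathbb R$ $C^2$, $\nabla\tilde f_i(x;x)=\nabla f_i(x)$, $\nabla\tilde f_i(\cdot;x)$ $\tilde L_i$-Lipschitz, $\tilde f_i(\cdot;x)$ $\tilde\mu_i$-strongly convex on $\mathcal K$ for all $x\in\mathcal K$ (first-argument derivatives); constants $D_i^\ell\le D_i^u$ with $D_i^\ell I\preceq\nabla^2\tilde f_i(x;y)-\nabla^2F(x)\preceq D_i^uI$ on $\mathcal K\times\mathcal K$. SONATA: $x_i^0\in\mathcal K$, $y_i^0=\nabla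 f_i(x_i^0)$; $\hat x_i^\nu=\arg\min_{x_i\in\mathcal K}\tilde f_i(x_i;x_i^\nu)+(y_i^\nu-\nabla f_i(x_i^\nu))^\top(x_i-x_i^\nu)+G(x_i)$; $d_i^\nu=\hat x_i^\nu-x_i^\nu$; $x_i^{\nu+1/2}=x_i^\nu+\alpha d_i^\nu$; $x_i^{\nu+1}=\sum_jw_{ij}x_j^{\nu+1/2}$; $y_i^{\nu+1}=\sum_jw_{ij}(y_j^\nu+\nabla f_j(x_j^{\nu+1})-\nabla f_j(x_j^\nu))$. Tracking error $\delta_i^\nu=\nabla F(x_i^\nu)-y_i^\nu$. *)

theory Defs
  imports "HOL-Analysis.Analysis"
begin

definition C2_on :: "'b::euclidean_space set \<Rightarrow> ('b \<Rightarrow> real) \<Rightarrow> bool" where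
  "C2_on S g \<longleftrightarrow> (\<exists>(Dg::'b \<Rightarrow> 'b) (H::'b \<Rightarrow> 'b \<Rightarrow>\<^sub>L 'b).
     (\<forall>x\<in>S. (g has_derivative (\<lambda>h. Dg x \<bullet> h)) (at x) \<and>
             (Dg has_derivative blinfun_apply (H x)) (at x)) \<and> continuous_on S H)"

definition strongly_convex_on :: "'a::real_normed_vector set \<Rightarrow> real \<Rightarrow> ('a \<Rightarrow> real) \<Rightarrow> bool" where
  "strongly_convex_on S c f \<longleftrightarrow> convex S \<and>
    (\<forall>x\<in>S. \<forall>y\<in>S. \<forall>u. 0 \<le> u \<and> u \<le> 1 \<longrightarrow>
       f (u *\<^sub>R x + (1 - u) *\<^sub>R y) \<le> u * f x + (1 - u) * f y - c / 2 * u * (1 - u) * (norm (x - y))\<^sup>2)"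

definition connected_undirected_graph :: "nat \<Rightarrow> (nat \<times> nat) set \<Rightarrow> bool" where
  "connected_undirected_graph m E \<longleftrightarrow>
     E \<subseteq> {(i,j). i < m \<and> j < m \<and> i \<noteq> j} \<and> sym E \<and>
     (\<forall>i<m. \<forall>j<m. (i,j) \<in> E\<^sup>*)"

end

theory Submission
  imports Defs
begin

text \<open>Let \<open>d = xhat - x\<close>. Along the segment \<open>x + t d\<close>, the function \<open>F\<close> minus the
  surrogate \<open>ft i \<cdot> x\<close> has second derivative at most \<open>-Dl i * |d|^2\<close>, so a second-order
  Taylor bound controls \<open>F\<close> at \<open>x + \<alpha> d\<close> by the surrogate. The surrogate is
  \<open>\<mu>t i\<close>-strongly convex and \<open>G\<close> is convex, so both are bounded by their chords at
  \<open>x + \<alpha> d\<close>; and since \<open>xhat\<close> minimises a \<open>\<mu>t i\<close>-strongly convex function, it improves on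
  \<open>x\<close> by \<open>\<mu>t i / 2 * |d|^2\<close>. The tracking error enters only through
  \<open>(gF x - y) \<bullet> d\<close>, which Cauchy-Schwarz bounds.\<close>

lemma convex_step_mem:
  assumes "convex K" "x \<in> K" "y \<in> K" "0 \<le> t" "t \<le> 1"
  shows "x + t *\<^sub>R (y - x) \<in> K"
proof -
  have "x + t *\<^sub>R (y - x) = (1 - t) *\<^sub>R x + t *\<^sub>R y"
    by (simp add: algebra_simps)
  then show ?thesis
    using convexD[OF assms(1-3), of "1 - t" t] assms(4,5) by simp
qed

lemma DERIV_le_imp_diff_le:
  fixes f g f' g' :: "real \<Rightarrow> real"
  assumes "a \<le> b"
    and f: "\<And>t. a \<le> t \<Longrightarrow> t \<le> b \<Longrightarrow> (f has_real_derivative f' t) (at t)"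
    and g: "\<And>t. a \<le> t \<Longrightarrow> t \<le> b \<Longrightarrow> (g has_real_derivative g' t) (at t)"
    and le: "\<And>t. a \<le> t \<Longrightarrow> t \<le> b \<Longrightarrow> f' t \<le> g' t"
  shows "f b - f a \<le> g b - g a"
proof -
  have "(\<lambda>t. f t - g t) b \<le> (\<lambda>t. f t - g t) a"
  proof (rule DERIV_nonpos_imp_nonincreasing[OF assms(1)])
    fix t assume "a \<le> t" "t \<le> b"
    then show "\<exists>y. ((\<lambda>t. f t - g t) has_real_derivative y) (at t) \<and> y \<le> 0"
      using DERIV_diff[OF f g] le by fastforce
  qed
  then show ?thesis by simp
qed

lemma DERIV_second_order_upper_bound:
  fixes f f' f'' :: "real \<Rightarrow> real"
  assumes "0 \<le> a"
    and f': "\<And>t. 0 \<le> t \<Longrightarrow> t \<le> a \<Longrightarrow> (f has_real_derivative f' t) (at t)"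
    and f'': "\<And>t. 0 \<le> t \<Longrightarrow> t \<le> a \<Longrightarrow> (f' has_real_derivative f'' t) (at t)"
    and le: "\<And>t. 0 \<le> t \<Longrightarrow> t \<le> a \<Longrightarrow> f'' t \<le> c"
  shows "f a \<le> f 0 + a * f' 0 + c / 2 * a\<^sup>2"
proof -
  have slope: "f' t \<le> f' 0 + c * t" if "0 \<le> t" "t \<le> a" for t
    using DERIV_le_imp_diff_le[of 0 t f' f'' "\<lambda>s. c * s" "\<lambda>_. c"] that f'' le
    by (fastforce intro!: derivative_eq_intros)
  have "f a - f 0 \<le> (f' 0 * a + c / 2 * a\<^sup>2) - (f' 0 * 0 + c / 2 * 0\<^sup>2)"
    by (rule DERIV_le_imp_diff_le[OF assms(1) f', of "\<lambda>s. f' 0 * s + c / 2 * s\<^sup>2" "\<lambda>s. f' 0 + c * s"])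
       (auto intro!: derivative_eq_intros slope)
  then show ?thesis by (simp add: algebra_simps)
qed

lemma has_derivative_along_line:
  assumes "(g has_derivative g') (at (x + t *\<^sub>R d))"
  shows "((\<lambda>s. g (x + s *\<^sub>R d)) has_derivative (\<lambda>s. g' (s *\<^sub>R d))) (at t)"
proof -
  have "((\<lambda>s. x + s *\<^sub>R d) has_derivative (\<lambda>s. s *\<^sub>R d)) (at t)"
    by (auto intro!: derivative_eq_intros)
  from has_derivative_compose[OF this assms] show ?thesis by simp
qed

lemma second_order_upper_bound_on_segment:
  fixes \<phi> :: "'a::real_inner \<Rightarrow> real" and g :: "'a \<Rightarrow> 'a" and H :: "'a \<Rightarrow> 'a \<Rightarrow> 'a"
  assumes "convex K" "x \<in> K" "x' \<in> K" "0 \<le> \<alpha>" "\<alpha> \<le> 1"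
    and grad: "\<And>z. z \<in> K \<Longrightarrow> (\<phi> has_derivative (\<lambda>h. g z \<bullet> h)) (at z)"
    and hess: "\<And>z. z \<in> K \<Longrightarrow> (g has_derivative H z) (at z)"
    and hess_le: "\<And>z h. z \<in> K \<Longrightarrow> h \<bullet> H z h \<le> c * (norm h)\<^sup>2"
  shows "\<phi> (x + \<alpha> *\<^sub>R (x' - x))
    \<le> \<phi> x + \<alpha> * (g x \<bullet> (x' - x)) + c / 2 * \<alpha>\<^sup>2 * (norm (x' - x))\<^sup>2"
proof -
  define d where "d = x' - x"
  have seg: "x + t *\<^sub>R d \<in> K" if "0 \<le> t" "t \<le> 1" for t
    using convex_step_mem[OF assms(1-3) that] by (simp add: d_def)
  have "\<phi> (x + \<alpha> *\<^sub>R d) \<le> \<phi> (x + 0 *\<^sub>R d) + \<alpha> * (g (x + 0 *\<^sub>R d) \<bullet> d) + c * (norm d)\<^sup>2 / 2 * \<alpha>\<^sup>2"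
  proof (rule DERIV_second_order_upper_bound[where f = "\<lambda>t. \<phi> (x + t *\<^sub>R d)"])
    fix t assume t: "0 \<le> t" "t \<le> \<alpha>"
    then have zK: "x + t *\<^sub>R d \<in> K" using seg assms(5) by simp
    show "((\<lambda>t. \<phi> (x + t *\<^sub>R d)) has_real_derivative g (x + t *\<^sub>R d) \<bullet> d) (at t)"
      using has_derivative_along_line[OF grad[OF zK]]
      by (simp add: has_field_derivative_def mult_commute_abs)
    have lin: "linear (H (x + t *\<^sub>R d))" using hess[OF zK] has_derivative_linear by blast
    show "((\<lambda>t. g (x + t *\<^sub>R d) \<bullet> d) has_real_derivative d \<bullet> H (x + t *\<^sub>R d) d) (at t)"
      using has_derivative_inner_left[OF has_derivative_along_line[OF hess[OF zK]], of d] lin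
      by (simp add: has_field_derivative_def linear_cmul inner_commute mult_commute_abs)
    show "d \<bullet> H (x + t *\<^sub>R d) d \<le> c * (norm d)\<^sup>2" using hess_le[OF zK] .
  qed (use assms(4) in simp)
  then show ?thesis by (simp add: d_def algebra_simps)
qed

lemma convex_on_inner_affine:
  fixes v x0 :: "'a::real_inner"
  assumes "convex S"
  shows "convex_on S (\<lambda>z. v \<bullet> (z - x0))"
proof (rule convex_onI[OF _ assms])
  fix x y :: 'a and t :: real
  have "v \<bullet> ((1 - t) *\<^sub>R x + t *\<^sub>R y - x0) = (1 - t) * (v \<bullet> (x - x0)) + t * (v \<bullet> (y - x0))"
    by (simp add: inner_diff_right inner_add_right algebra_simps)
  then show "v \<bullet> ((1 - t) *\<^sub>R x + t *\<^sub>R y - x0) \<le> (1 - t) * (v \<bullet> (x - x0)) + t * (v \<bullet> (y - x0))"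
    by simp
qed

lemma strongly_convex_on_add_convex:
  assumes "strongly_convex_on S c f" "convex_on S g"
  shows "strongly_convex_on S c (\<lambda>x. f x + g x)"
  unfolding strongly_convex_on_def
proof (intro conjI ballI allI impI)
  show "convex S" using assms(1) by (simp add: strongly_convex_on_def)
  fix x y and u :: real assume xy: "x \<in> S" "y \<in> S" and u: "0 \<le> u \<and> u \<le> 1"
  have "f (u *\<^sub>R x + (1 - u) *\<^sub>R y) \<le> u * f x + (1 - u) * f y - c / 2 * u * (1 - u) * (norm (x - y))\<^sup>2"
    using assms(1) xy u by (simp add: strongly_convex_on_def)
  moreover have "g (u *\<^sub>R x + (1 - u) *\<^sub>R y) \<le> u * g x + (1 - u) * g y"
    using convex_onD[OF assms(2), of "1 - u" x y] xy u by (simp add: add.commute)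
  ultimately show "f (u *\<^sub>R x + (1 - u) *\<^sub>R y) + g (u *\<^sub>R x + (1 - u) *\<^sub>R y)
      \<le> u * (f x + g x) + (1 - u) * (f y + g y) - c / 2 * u * (1 - u) * (norm (x - y))\<^sup>2"
    by (simp add: algebra_simps)
qed

lemma strongly_convex_on_minimizer_growth:
  assumes sc: "strongly_convex_on S c f" and "x \<in> S" "y \<in> S"
    and min: "\<And>z. z \<in> S \<Longrightarrow> f x \<le> f z"
  shows "f x + c / 2 * (norm (y - x))\<^sup>2 \<le> f y"
proof -
  define N where "N = c / 2 * (norm (y - x))\<^sup>2"
  have "f x \<le> f y - N * (1 - u)" if u: "0 < u" "u \<le> 1" for u
  proof -
    have "u *\<^sub>R y + (1 - u) *\<^sub>R x \<in> S"
      using sc \<open>x \<in> S\<close> \<open>y \<in> S\<close> u convexD[of S y x u "1 - u"]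
      by (simp add: strongly_convex_on_def)
    then have "f x \<le> f (u *\<^sub>R y + (1 - u) *\<^sub>R x)" by (rule min)
    also have "\<dots> \<le> u * f y + (1 - u) * f x - c / 2 * u * (1 - u) * (norm (y - x))\<^sup>2"
      using sc \<open>x \<in> S\<close> \<open>y \<in> S\<close> u unfolding strongly_convex_on_def by auto
    also have "\<dots> = u * f y + (1 - u) * f x - u * (N * (1 - u))"
      by (simp add: N_def)
    finally have "u * f x \<le> u * (f y - N * (1 - u))" by (simp add: algebra_simps)
    then show ?thesis using u by simp
  qed
  then have "\<forall>\<^sub>F u in at_right 0. f x \<le> f y - N * (1 - u)"
    by (intro eventually_at_rightI[of _ 1]) auto
  moreover have "((\<lambda>u. f y - N * (1 - u)) \<longlongrightarrow> f y - N * (1 - 0)) (at_right 0)"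
    by (intro tendsto_intros)
  ultimately have "f x \<le> f y - N"
    using tendsto_lowerbound[of "\<lambda>u. f y - N * (1 - u)"] by simp
  then show ?thesis by (simp add: N_def)
qed

lemma surrogate_descent_step:
  fixes F G s :: "'a::real_inner \<Rightarrow> real" and gF gs :: "'a \<Rightarrow> 'a"
    and HF Hs :: "'a \<Rightarrow> 'a \<Rightarrow> 'a"
  assumes K: "convex K" "x \<in> K" "x' \<in> K" and \<alpha>: "0 \<le> \<alpha>" "\<alpha> \<le> 1"
    and F_grad: "\<And>z. z \<in> K \<Longrightarrow> (F has_derivative (\<lambda>h. gF z \<bullet> h)) (at z)"
    and F_hess: "\<And>z. z \<in> K \<Longrightarrow> (gF has_derivative HF z) (at z)"
    and s_grad: "\<And>z. z \<in> K \<Longrightarrow> (s has_derivative (\<lambda>h. gs z \<bullet> h)) (at z)"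
    and s_hess: "\<And>z. z \<in> K \<Longrightarrow> (gs has_derivative Hs z) (at z)"
    and hess_gap: "\<And>z h. z \<in> K \<Longrightarrow> D * (norm h)\<^sup>2 \<le> h \<bullet> (Hs z h - HF z h)"
    and s_sc: "strongly_convex_on K \<mu> s"
    and G: "convex_on K G"
    and x'_min: "\<And>z. z \<in> K \<Longrightarrow>
      s x' + (v - gs x) \<bullet> (x' - x) + G x' \<le> s z + (v - gs x) \<bullet> (z - x) + G z"
  shows "F (x + \<alpha> *\<^sub>R (x' - x)) + G (x + \<alpha> *\<^sub>R (x' - x))
    \<le> F x + G x - \<alpha> * ((1 - \<alpha> / 2) * \<mu> + \<alpha> / 2 * D) * (norm (x' - x))\<^sup>2
      + \<alpha> * norm (x' - x) * norm (gF x - v)"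
proof -
  define d where "d = x' - x"
  define xa where "xa = x + \<alpha> *\<^sub>R d"
  define N where "N = (norm d)\<^sup>2"
  have gap: "F xa - s xa \<le> F x - s x + \<alpha> * ((gF x - gs x) \<bullet> d) - D / 2 * \<alpha>\<^sup>2 * N"
  proof -
    have "h \<bullet> (HF z h - Hs z h) \<le> - D * (norm h)\<^sup>2" if "z \<in> K" for z h
      using hess_gap[OF that, of h] by (simp add: inner_diff_right)
    then show ?thesis
      using second_order_upper_bound_on_segment[OF K \<alpha>, of "\<lambda>z. F z - s z" "\<lambda>z. gF z - gs z"
          "\<lambda>z h. HF z h - Hs z h" "- D"]
      by (auto simp: xa_def d_def N_def inner_diff_left intro!: derivative_eq_intros F_grad F_hess s_grad s_hess)
  qed
  have growth: "s x' + (v - gs x) \<bullet> d + G x' + \<mu> / 2 * N \<le> s x + G x"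
  proof -
    have "strongly_convex_on K \<mu> (\<lambda>z. s z + ((v - gs x) \<bullet> (z - x) + G z))"
      using K(1) by (intro strongly_convex_on_add_convex convex_on_add convex_on_inner_affine s_sc G)
    from strongly_convex_on_minimizer_growth[OF this K(3,2)] x'_min
    show ?thesis by (simp add: d_def N_def norm_minus_commute add_ac)
  qed
  have s_step: "s xa \<le> \<alpha> * s x' + (1 - \<alpha>) * s x - \<mu> / 2 * \<alpha> * (1 - \<alpha>) * N"
  proof -
    have "xa = \<alpha> *\<^sub>R x' + (1 - \<alpha>) *\<^sub>R x" by (simp add: xa_def d_def algebra_simps)
    then show ?thesis using s_sc K \<alpha> by (auto simp: strongly_convex_on_def N_def d_def)
  qed
  have G_step: "G xa \<le> (1 - \<alpha>) * G x + \<alpha> * G x'"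
  proof -
    have "xa = (1 - \<alpha>) *\<^sub>R x + \<alpha> *\<^sub>R x'" by (simp add: xa_def d_def algebra_simps)
    then show ?thesis using convex_onD[OF G, of \<alpha> x x'] K \<alpha> by simp
  qed
  have CS: "(gF x - v) \<bullet> d \<le> norm d * norm (gF x - v)"
    using norm_cauchy_schwarz[of "gF x - v" d] by (simp add: mult.commute)
  have "F xa + G xa = (F xa - s xa) + s xa + G xa"
    by simp
  also have "\<dots> \<le> (F x - s x + \<alpha> * ((gF x - gs x) \<bullet> d) - D / 2 * \<alpha>\<^sup>2 * N)
      + (\<alpha> * s x' + (1 - \<alpha>) * s x - \<mu> / 2 * \<alpha> * (1 - \<alpha>) * N) + ((1 - \<alpha>) * G x + \<alpha> * G x')"
    using gap s_step G_step by linarith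
  also have "\<dots> = F x + G x + \<alpha> * (s x' + (v - gs x) \<bullet> d + G x' + \<mu> / 2 * N - s x - G x)
      + \<alpha> * ((gF x - v) \<bullet> d) - \<alpha> * ((1 - \<alpha> / 2) * \<mu> + \<alpha> / 2 * D) * N"
    by (simp add: inner_diff_left field_simps power2_eq_square)
  also have "\<dots> \<le> F x + G x - \<alpha> * ((1 - \<alpha> / 2) * \<mu> + \<alpha> / 2 * D) * N
      + \<alpha> * (norm d * norm (gF x - v))"
  proof -
    have "\<alpha> * (s x' + (v - gs x) \<bullet> d + G x' + \<mu> / 2 * N - s x - G x) \<le> 0"
      using growth \<alpha> by (simp add: mult_nonneg_nonpos)
    moreover have "\<alpha> * ((gF x - v) \<bullet> d) \<le> \<alpha> * (norm d * norm (gF x - v))"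
      using CS \<alpha> by (intro mult_left_mono) auto
    ultimately show ?thesis by linarith
  qed
  finally show ?thesis by (simp add: xa_def d_def N_def mult.assoc)
qed

lemma sonata_iterates_in_convex:
  fixes m :: nat and x xhat :: "nat \<Rightarrow> nat \<Rightarrow> 'a::real_vector"
  assumes K: "convex K" and \<alpha>: "0 \<le> \<alpha>" "\<alpha> \<le> 1"
    and W_nonneg: "\<And>i j. i < m \<Longrightarrow> j < m \<Longrightarrow> 0 \<le> W i j"
    and W_row: "\<And>i. i < m \<Longrightarrow> (\<Sum>j<m. W i j) = 1"
    and x0: "\<And>i. i < m \<Longrightarrow> x 0 i \<in> K"
    and xhat: "\<And>\<nu> i. i < m \<Longrightarrow> xhat \<nu> i \<in> K"
    and x_next: "\<And>\<nu> i. i < m \<Longrightarrow>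
      x (Suc \<nu>) i = (\<Sum>j<m. W i j *\<^sub>R (x \<nu> j + \<alpha> *\<^sub>R (xhat \<nu> j - x \<nu> j)))"
    and "i < m"
  shows "x \<nu> i \<in> K"
  using \<open>i < m\<close>
proof (induction \<nu> arbitrary: i)
  case 0
  then show ?case by (rule x0)
next
  case (Suc \<nu>)
  have step: "x \<nu> j + \<alpha> *\<^sub>R (xhat \<nu> j - x \<nu> j) \<in> K" if "j < m" for j
    using convex_step_mem[OF K Suc.IH[OF that] xhat[OF that] \<alpha>] .
  show ?case
    unfolding x_next[OF Suc.prems]
    by (rule convex_sum) (use K W_row[OF Suc.prems] W_nonneg[OF Suc.prems] step in auto)
qed

lemma has_derivative_average:
  fixes f :: "nat \<Rightarrow> 'a::real_normed_vector \<Rightarrow> 'b::real_normed_vector"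
  assumes "\<And>i. i < m \<Longrightarrow> (f i has_derivative f' i) (at z)"
  shows "((\<lambda>z. (1 / real m) *\<^sub>R (\<Sum>i<m. f i z)) has_derivative
    (\<lambda>h. (1 / real m) *\<^sub>R (\<Sum>i<m. f' i h))) (at z)"
  using assms by (auto intro!: derivative_eq_intros)

theorem lemma3p1:
  fixes m :: nat
    and K Ob :: "'a::euclidean_space set"
    and f :: "nat \<Rightarrow> 'a \<Rightarrow> real" and gf :: "nat \<Rightarrow> 'a \<Rightarrow> 'a" and Hf :: "nat \<Rightarrow> 'a \<Rightarrow> 'a \<Rightarrow> 'a"
    and G :: "'a \<Rightarrow> real" and \<mu> L :: real
    and E :: "(nat \<times> nat) set" and W :: "nat \<Rightarrow> nat \<Rightarrow> real"
    and ft :: "nat \<Rightarrow> 'a \<Rightarrow> 'a \<Rightarrow> real" and gft :: "nat \<Rightarrow> 'a \<Rightarrow> 'a \<Rightarrow> 'a"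
    and Hft :: "nat \<Rightarrow> 'a \<Rightarrow> 'a \<Rightarrow> 'a \<Rightarrow> 'a"
    and Lt \<mu>t Dl Du :: "nat \<Rightarrow> real"
    and \<alpha> :: real
    and x y xhat xhalf :: "nat \<Rightarrow> nat \<Rightarrow> 'a"
    and F U :: "'a \<Rightarrow> real" and gF :: "'a \<Rightarrow> 'a" and HF :: "'a \<Rightarrow> 'a \<Rightarrow> 'a"
  assumes m_pos: "m \<ge> 1"
    \<comment> \<open>(A)\<close>
    and K_nonempty: "K \<noteq> {}" and K_closed: "closed K" and K_convex: "convex K"
    and O_open: "open Ob" and K_sub_O: "K \<subseteq> Ob"
    and f_grad: "\<And>i z. i < m \<Longrightarrow> z \<in> Ob \<Longrightarrow> (f i has_derivative (\<lambda>h. gf i z \<bullet> h)) (at z)"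
    and f_hess: "\<And>i z. i < m \<Longrightarrow> z \<in> Ob \<Longrightarrow> (gf i has_derivative Hf i z) (at z)"
    and f_convex: "\<And>i. i < m \<Longrightarrow> convex_on K (f i)"
    and F_def: "\<And>z. F z = (1 / real m) * (\<Sum>i<m. f i z)"
    and gF_def: "\<And>z. gF z = (1 / real m) *\<^sub>R (\<Sum>i<m. gf i z)"
    and HF_def: "\<And>z h. HF z h = (1 / real m) *\<^sub>R (\<Sum>i<m. Hf i z h)"
    and mu_pos: "\<mu> > 0"
    and F_hess_bounds: "\<And>z h. z \<in> K \<Longrightarrow>
          \<mu> * (norm h)\<^sup>2 \<le> h \<bullet> HF z h \<and> h \<bullet> HF z h \<le> L * (norm h)\<^sup>2"
    and G_convex: "convex_on K G"
    and U_def: "\<And>z. U z = F z + G z"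
    \<comment> \<open>(B)\<close>
    and graph: "connected_undirected_graph m E"
    \<comment> \<open>(W)\<close>
    and W_diag: "\<And>i. i < m \<Longrightarrow> W i i > 0"
    and W_offdiag: "\<And>i j. i < m \<Longrightarrow> j < m \<Longrightarrow> i \<noteq> j \<Longrightarrow>
          (W i j > 0 \<longleftrightarrow> (i, j) \<in> E) \<and> ((i, j) \<notin> E \<longrightarrow> W i j = 0)"
    and W_row: "\<And>i. i < m \<Longrightarrow> (\<Sum>j<m. W i j) = 1"
    and W_col: "\<And>j. j < m \<Longrightarrow> (\<Sum>i<m. W i j) = 1"
    \<comment> \<open>(C)\<close>
    and ft_C2: "\<And>i. i < m \<Longrightarrow> C2_on (Ob \<times> Ob) (\<lambda>p. ft i (fst p) (snd p))"
    and ft_grad: "\<And>i z w. i < m \<Longrightarrow> z \<in> Ob \<Longrightarrow> w \<in> Ob \<Longrightarrow>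
          ((\<lambda>v. ft i v w) has_derivative (\<lambda>h. gft i z w \<bullet> h)) (at z)"
    and ft_hess: "\<And>i z w. i < m \<Longrightarrow> z \<in> Ob \<Longrightarrow> w \<in> Ob \<Longrightarrow>
          ((\<lambda>v. gft i v w) has_derivative Hft i z w) (at z)"
    and ft_consistent: "\<And>i z. i < m \<Longrightarrow> z \<in> Ob \<Longrightarrow> gft i z z = gf i z"
    and ft_lipschitz: "\<And>i w. i < m \<Longrightarrow> w \<in> K \<Longrightarrow> (Lt i)-lipschitz_on K (\<lambda>v. gft i v w)"
    and mut_pos: "\<And>i. i < m \<Longrightarrow> \<mu>t i > 0"
    and ft_strongly_convex: "\<And>i w. i < m \<Longrightarrow> w \<in> K \<Longrightarrow> strongly_convex_on K (\<mu>t i) (\<lambda>v. ft i v w)"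
    and D_le: "\<And>i. i < m \<Longrightarrow> Dl i \<le> Du i"
    and ft_hess_bounds: "\<And>i z w h. i < m \<Longrightarrow> z \<in> K \<Longrightarrow> w \<in> K \<Longrightarrow>
          Dl i * (norm h)\<^sup>2 \<le> h \<bullet> (Hft i z w h - HF z h) \<and>
          h \<bullet> (Hft i z w h - HF z h) \<le> Du i * (norm h)\<^sup>2"
    \<comment> \<open>SONATA\<close>
    and step: "0 < \<alpha>" "\<alpha> \<le> 1"
    and x0: "\<And>i. i < m \<Longrightarrow> x 0 i \<in> K"
    and y0: "\<And>i. i < m \<Longrightarrow> y 0 i = gf i (x 0 i)"
    and xhat_in: "\<And>\<nu> i. i < m \<Longrightarrow> xhat \<nu> i \<in> K"
    and xhat_min: "\<And>\<nu> i z. i < m \<Longrightarrow> z \<in> K \<Longrightarrow>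
          ft i (xhat \<nu> i) (x \<nu> i) + (y \<nu> i - gf i (x \<nu> i)) \<bullet> (xhat \<nu> i - x \<nu> i) + G (xhat \<nu> i)
          \<le> ft i z (x \<nu> i) + (y \<nu> i - gf i (x \<nu> i)) \<bullet> (z - x \<nu> i) + G z"
    and xhalf_def: "\<And>\<nu> i. i < m \<Longrightarrow> xhalf \<nu> i = x \<nu> i + \<alpha> *\<^sub>R (xhat \<nu> i - x \<nu> i)"
    and x_next: "\<And>\<nu> i. i < m \<Longrightarrow> x (Suc \<nu>) i = (\<Sum>j<m. W i j *\<^sub>R xhalf \<nu> j)"
    and y_next: "\<And>\<nu> i. i < m \<Longrightarrow> y (Suc \<nu>) i =
          (\<Sum>j<m. W i j *\<^sub>R (y \<nu> j + gf j (x (Suc \<nu>) j) - gf j (x \<nu> j)))"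
  shows "\<forall>i<m. \<forall>\<nu>.
     U (xhalf \<nu> i) \<le> U (x \<nu> i)
       - \<alpha> * ((1 - \<alpha> / 2) * \<mu>t i + \<alpha> / 2 * Dl i) * (norm (xhat \<nu> i - x \<nu> i))\<^sup>2
       + \<alpha> * norm (xhat \<nu> i - x \<nu> i) * norm (gF (x \<nu> i) - y \<nu> i)"
proof -
  have W_nonneg: "0 \<le> W i j" if "i < m" "j < m" for i j
    using W_diag[OF that(1)] W_offdiag[OF that] by (cases "i = j") (auto simp: less_le)
  have F_grad: "(F has_derivative (\<lambda>h. gF z \<bullet> h)) (at z)" if "z \<in> K" for z
    using has_derivative_average[of m f "\<lambda>i h. gf i z \<bullet> h"] f_grad K_sub_O that
    by (auto simp: F_def[abs_def] gF_def inner_sum_left)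
  have gF_hess: "(gF has_derivative HF z) (at z)" if "z \<in> K" for z
    using has_derivative_average[of m gf "\<lambda>i. Hf i z"] f_hess K_sub_O that
    by (auto simp: gF_def[abs_def] HF_def[abs_def])
  show ?thesis
  proof (intro allI impI)
    fix i \<nu> assume i: "i < m"
    have xK: "x \<nu> i \<in> K"
      by (rule sonata_iterates_in_convex[where W = W and xhat = xhat and \<alpha> = \<alpha>])
         (use K_convex step W_nonneg W_row x0 xhat_in i in \<open>auto simp: x_next xhalf_def\<close>)
    then have xO: "x \<nu> i \<in> Ob" using K_sub_O by blast
    show "U (xhalf \<nu> i) \<le> U (x \<nu> i)
       - \<alpha> * ((1 - \<alpha> / 2) * \<mu>t i + \<alpha> / 2 * Dl i) * (norm (xhat \<nu> i - x \<nu> i))\<^sup>2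
       + \<alpha> * norm (xhat \<nu> i - x \<nu> i) * norm (gF (x \<nu> i) - y \<nu> i)"
      unfolding xhalf_def[OF i] U_def
      by (rule surrogate_descent_step[where gs = "\<lambda>z. gft i z (x \<nu> i)"
            and Hs = "\<lambda>z. Hft i z (x \<nu> i)" and v = "y \<nu> i",
            OF K_convex xK xhat_in[OF i] _ step(2) F_grad gF_hess _ _ _
            ft_strongly_convex[OF i xK] G_convex])
         (use step(1) xhat_min[OF i] ft_hess_bounds[OF i _ xK] ft_grad[OF i _ xO] ft_hess[OF i _ xO]
            ft_consistent[OF i xO] subsetD[OF K_sub_O] in auto)
  qed
qed

end
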